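(* The typical subranks of real $3\times4\times4$ tensors are exactly $2$ and $3$.
   Context: For $r \geq 0$ let $I_r := \sum_{j=1}^r e_j \otimes e_j \otimes e_j$. The subrank of $T \in \mathbb{R}^{n_1} \otimes \mathbb{R}^{n_2} \otimes \mathbb{R}^{n_3}$ is $Q(T) := \max\{ r \mid \exists\ \mathbb{R}\text{-linear } \varphi_i : \mathbb{R}^{n_i} \to \mathbb{R}^r,\ (\varphi_1 \otimes \varphi_2 \otimes \varphi_3) T = I_r\}$. An integer $r$ is a typical subrank of the format $n_1\times n_2\times n_3$ if $\{T \mid Q(T) = r\}$ contains a nonempty Euclidean-open subset of $\mathbb{R}^{n_1} \otimes \mathbb{R}^{n_2} \otimes \mathbb{R}^{n_3}$. *)

theory Defs
  imports "HOL-Analysis.Analysis"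
begin

text \<open>A tensor in R^n1 (x) R^n2 (x) R^n3 is an element of real^'c^'b^'a with
  CARD('a) = n1, CARD('b) = n2, CARD('c) = n3; its entries are T$a$b$c.
  A linear map R^ni -> R^r is given by its r x ni matrix, a function
  nat => 'a => real whose rows with index < r are used.
  (phi1 (x) phi2 (x) phi3) T = I_r is written out entrywise.\<close>

definition restricts_to_unit :: "nat \<Rightarrow> real^'c^'b^'a \<Rightarrow> bool" where
  "restricts_to_unit r T \<longleftrightarrow>
     (\<exists>(A :: nat \<Rightarrow> 'a \<Rightarrow> real) (B :: nat \<Rightarrow> 'b \<Rightarrow> real) (C :: nat \<Rightarrow> 'c \<Rightarrow> real).
        \<forall>i<r. \<forall>j<r. \<forall>k<r.
          (\<Sum>a\<in>UNIV. \<Sum>b\<in>UNIV. \<Sum>c\<in>UNIV. A i a * B j b * C k c * T$a$b$c)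
            = (if i = j \<and> j = k then 1 else 0))"

definition subrank :: "real^'c^'b^'a \<Rightarrow> nat" where
  "subrank T = Max {r. restricts_to_unit r T}"

definition typical_subrank :: "(real^'c^'b^'a) itself \<Rightarrow> nat \<Rightarrow> bool" where
  "typical_subrank _ r \<longleftrightarrow>
     (\<exists>S :: (real^'c^'b^'a) set. open S \<and> S \<noteq> {} \<and> (\<forall>T\<in>S. subrank T = r))"

end

theory Submission
  imports Defs "HOL-Computational_Algebra.Polynomial"
begin

(* If T restricts to I_3 via maps A, B, C, the slice combination M = sum_a A_0a T_a maps the
  3-dimensional span of C_0, C_1, C_2 into the orthogonal complement of the 2-dimensional span
  of B_1, B_2 in R^4, so M is singular. Near the tensor whose slices are left multiplication by
  1, i, j on the quaternions every nonzero slice combination is invertible, so there the subrank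
  is at most 2. Subrank at least 2 holds wherever an explicit polynomial in the entries is
  nonzero, which is a dense open set. Finally, the map sending (sigma, A, B, C) to a base tensor
  plus sigma, transformed by 1 + A, 1 + B, 1 + C, has surjective derivative at 0; by the open
  mapping theorem its image, all of whose elements restrict to I_3, has interior points. *)

definition trilinear_form :: "real^'c^'b^'a \<Rightarrow> real^'a \<Rightarrow> real^'b \<Rightarrow> real^'c \<Rightarrow> real" where
  "trilinear_form T x y z = (\<Sum>a\<in>UNIV. \<Sum>b\<in>UNIV. \<Sum>c\<in>UNIV. x$a * y$b * z$c * T$a$b$c)"

definition slice :: "real^'c^'b^'a \<Rightarrow> real^'a \<Rightarrow> real^'c^'b" where
  "slice T x = (\<chi> b c. \<Sum>a\<in>UNIV. x$a * T$a$b$c)"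

definition contract_last_two :: "real^'c^'b^'a \<Rightarrow> real^'b \<Rightarrow> real^'c \<Rightarrow> real^'a" where
  "contract_last_two T y z = (\<chi> a. y \<bullet> (T$a *v z))"

lemma trilinear_form_eq_contract_last_two: "trilinear_form T x y z = x \<bullet> contract_last_two T y z"
  by (simp add: trilinear_form_def contract_last_two_def inner_vec_def matrix_vector_mult_def
      sum_distrib_left mult_ac)

lemma trilinear_form_eq_slice: "trilinear_form T x y z = y \<bullet> (slice T x *v z)"
proof -
  have "trilinear_form T x y z = (\<Sum>b\<in>UNIV. \<Sum>c\<in>UNIV. \<Sum>a\<in>UNIV. x$a * y$b * z$c * T$a$b$c)"
    unfolding trilinear_form_def by (subst sum.swap) (rule sum.cong[OF refl], rule sum.swap)
  then show ?thesis
    by (simp add: slice_def inner_vec_def matrix_vector_mult_def sum_distrib_left sum_distrib_right mult_ac)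
qed

lemma sum_delta_mult:
  fixes f :: "'n::finite \<Rightarrow> 'r::semiring_1"
  shows "(\<Sum>j\<in>UNIV. (if i = j then 1 else 0) * f j) = f i"
    and "(\<Sum>j\<in>UNIV. (if j = i then 1 else 0) * f j) = f i"
  by (simp_all add: if_distrib[of "\<lambda>x. x * _"] cong: if_cong)

lemma trilinear_form_axis: "trilinear_form T (axis a 1) (axis b 1) (axis c 1) = T$a$b$c"
  unfolding trilinear_form_def axis_def
  by (simp add: mult.assoc sum_distrib_left[symmetric] sum_delta_mult)

lemma restricts_to_unit_iff_trilinear_form:
  "restricts_to_unit r T \<longleftrightarrow>
     (\<exists>\<alpha> \<beta> \<gamma>. \<forall>i<r. \<forall>j<r. \<forall>k<r.
        trilinear_form T (\<alpha> i) (\<beta> j) (\<gamma> k) = (if i = j \<and> j = k then 1 else 0))"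
proof
  assume "restricts_to_unit r T"
  then obtain A B C where "\<forall>i<r. \<forall>j<r. \<forall>k<r.
      (\<Sum>a\<in>UNIV. \<Sum>b\<in>UNIV. \<Sum>c\<in>UNIV. A i a * B j b * C k c * T$a$b$c) = (if i = j \<and> j = k then 1 else 0)"
    unfolding restricts_to_unit_def by blast
  then show "\<exists>\<alpha> \<beta> \<gamma>. \<forall>i<r. \<forall>j<r. \<forall>k<r.
      trilinear_form T (\<alpha> i) (\<beta> j) (\<gamma> k) = (if i = j \<and> j = k then 1 else 0)"
    by (intro exI[of _ "\<lambda>i. \<chi> a. A i a"] exI[of _ "\<lambda>j. \<chi> b. B j b"] exI[of _ "\<lambda>k. \<chi> c. C k c"])
       (simp add: trilinear_form_def)
next
  assume "\<exists>\<alpha> \<beta> \<gamma>. \<forall>i<r. \<forall>j<r. \<forall>k<r.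
      trilinear_form T (\<alpha> i) (\<beta> j) (\<gamma> k) = (if i = j \<and> j = k then 1 else 0)"
  then obtain \<alpha> \<beta> \<gamma> where "\<forall>i<r. \<forall>j<r. \<forall>k<r.
      trilinear_form T (\<alpha> i) (\<beta> j) (\<gamma> k) = (if i = j \<and> j = k then 1 else 0)"
    by blast
  then show "restricts_to_unit r T"
    unfolding restricts_to_unit_def
    by (intro exI[of _ "\<lambda>i a. \<alpha> i $ a"] exI[of _ "\<lambda>j b. \<beta> j $ b"] exI[of _ "\<lambda>k c. \<gamma> k $ c"])
       (simp add: trilinear_form_def)
qed

lemma restricts_to_unit_mono:
  assumes "restricts_to_unit r T" "r' \<le> r"
  shows "restricts_to_unit r' T"
proof -
  obtain \<alpha> \<beta> \<gamma> where "\<forall>i<r. \<forall>j<r. \<forall>k<r.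
      trilinear_form T (\<alpha> i) (\<beta> j) (\<gamma> k) = (if i = j \<and> j = k then 1 else 0)"
    using assms(1) unfolding restricts_to_unit_iff_trilinear_form by blast
  then show ?thesis
    unfolding restricts_to_unit_iff_trilinear_form using assms(2)
    by (intro exI[of _ \<alpha>] exI[of _ \<beta>] exI[of _ \<gamma>]) simp
qed

lemma restricts_to_unit_0: "restricts_to_unit 0 T"
  by (simp add: restricts_to_unit_def)

lemma biorthogonal_family_independent:
  fixes u v :: "'i \<Rightarrow> 'v::real_inner"
  assumes "finite I" and biorth: "\<And>i j. i \<in> I \<Longrightarrow> j \<in> I \<Longrightarrow> u i \<bullet> v j = (if i = j then 1 else 0)"
  shows "inj_on u I" "independent (u ` I)"
proof -
  show inj: "inj_on u I"
  proof (rule inj_onI)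
    fix i j assume "i \<in> I" "j \<in> I" "u i = u j"
    then show "i = j" using biorth[of i j] biorth[of j j] by (metis one_neq_zero)
  qed
  show "independent (u ` I)"
  proof
    assume "dependent (u ` I)"
    then obtain c j where j: "j \<in> I" "c (u j) \<noteq> 0" and comb: "(\<Sum>w\<in>u ` I. c w *\<^sub>R w) = 0"
      using \<open>finite I\<close> unfolding dependent_finite[OF finite_imageI[OF \<open>finite I\<close>]] by blast
    have "0 = (\<Sum>w\<in>u ` I. c w *\<^sub>R w) \<bullet> v j" using comb by simp
    also have "\<dots> = (\<Sum>i\<in>I. c (u i) * (u i \<bullet> v j))"
      by (simp add: inner_sum_left sum.reindex[OF inj])
    also have "\<dots> = (\<Sum>i\<in>I. if i = j then c (u i) else 0)"
      using j(1) by (intro sum.cong) (simp_all add: biorth)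
    also have "\<dots> = c (u j)" using j(1) \<open>finite I\<close> by simp
    finally show False using j(2) by simp
  qed
qed

lemma restricts_to_unit_le_card:
  fixes T :: "real^'c^'b^'a"
  assumes "restricts_to_unit r T"
  shows "r \<le> CARD('a)"
proof -
  obtain \<alpha> \<beta> \<gamma> where unit: "\<forall>i<r. \<forall>j<r. \<forall>k<r.
      trilinear_form T (\<alpha> i) (\<beta> j) (\<gamma> k) = (if i = j \<and> j = k then 1 else 0)"
    using assms unfolding restricts_to_unit_iff_trilinear_form by blast
  define \<nu> where "\<nu> j = contract_last_two T (\<beta> j) (\<gamma> j)" for j
  have "\<alpha> i \<bullet> \<nu> j = (if i = j then 1 else 0)" if "i \<in> {..<r}" "j \<in> {..<r}" for i j
    using unit that by (simp add: \<nu>_def flip: trilinear_form_eq_contract_last_two)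
  then have "inj_on \<alpha> {..<r}" "independent (\<alpha> ` {..<r})"
    using biorthogonal_family_independent[of "{..<r}" \<alpha> \<nu>] by auto
  then show ?thesis using independent_card_le[of "\<alpha> ` {..<r}"] by (simp add: card_image)
qed

lemma finite_restricts_to_unit: "finite {r. restricts_to_unit r (T::real^'c^'b^'a)}"
  by (rule finite_subset[of _ "{..CARD('a)}"]) (auto dest: restricts_to_unit_le_card)

lemma restricts_to_unit_subrank: "restricts_to_unit (subrank T) T"
proof -
  have "{r. restricts_to_unit r T} \<noteq> {}" using restricts_to_unit_0 by blast
  then show ?thesis unfolding subrank_def using Max_in[OF finite_restricts_to_unit] by simp
qed

lemma le_subrank: "restricts_to_unit r T \<Longrightarrow> r \<le> subrank T"
  unfolding subrank_def by (simp add: finite_restricts_to_unit)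

lemma subrank_le_card: "subrank (T::real^'c^'b^'a) \<le> CARD('a)"
  by (rule restricts_to_unit_le_card[OF restricts_to_unit_subrank])

lemma subrank_eqI:
  assumes "restricts_to_unit r T" "\<not> restricts_to_unit (Suc r) T"
  shows "subrank T = r"
proof (rule le_antisym)
  show "subrank T \<le> r"
    using assms(2) restricts_to_unit_mono[OF restricts_to_unit_subrank, of "Suc r" T]
    by (meson not_less_eq_eq)
qed (rule le_subrank[OF assms(1)])

section \<open>Restriction to a large unit tensor forces a singular slice\<close>

lemma linear_kernel_meets_subspace:
  fixes f :: "'a::euclidean_space \<Rightarrow> 'b::euclidean_space"
  assumes "linear f" "subspace U" "subspace V"
    and orth: "\<And>u v. u \<in> U \<Longrightarrow> v \<in> V \<Longrightarrow> f u \<bullet> v = 0"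
    and dim: "DIM('b) < dim U + dim V"
  obtains u where "u \<in> U" "u \<noteq> 0" "f u = 0"
proof -
  have "\<not> inj_on f U"
  proof
    assume "inj_on f U"
    then have "dim (f ` U) = dim U"
      using dim_image_eq[OF \<open>linear f\<close>, of U] \<open>subspace U\<close> span_eq_iff by metis
    moreover have "f ` U \<inter> V = {0}"
    proof
      show "f ` U \<inter> V \<subseteq> {0}" using orth by fastforce
      have "0 \<in> f ` U"
        using subspace_0[OF \<open>subspace U\<close>] linear_0[OF \<open>linear f\<close>] by (metis image_eqI)
      then show "{0} \<subseteq> f ` U \<inter> V" using subspace_0[OF \<open>subspace V\<close>] by blast
    qed
    moreover have "subspace (f ` U)" by (rule linear_subspace_image[OF \<open>linear f\<close> \<open>subspace U\<close>])
    ultimately have "dim {x + y |x y. x \<in> f ` U \<and> y \<in> V} = dim U + dim V"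
      using dim_sums_Int[of "f ` U" V] \<open>subspace V\<close> by simp
    then show False using dim dim_subset_UNIV[of "{x + y |x y. x \<in> f ` U \<and> y \<in> V}"] by simp
  qed
  then show ?thesis
    using that linear_inj_on_iff_eq_0[OF \<open>linear f\<close> \<open>subspace U\<close>] by blast
qed

lemma restricts_to_unit_singular_slice:
  fixes T :: "real^'c^'b^'a"
  assumes "restricts_to_unit r T" "CARD('b) + 1 < 2 * r"
  obtains x w where "x \<noteq> 0" "w \<noteq> 0" "slice T x *v w = 0"
proof -
  obtain \<alpha> \<beta> \<gamma> where "\<forall>i<r. \<forall>j<r. \<forall>k<r.
      trilinear_form T (\<alpha> i) (\<beta> j) (\<gamma> k) = (if i = j \<and> j = k then 1 else 0)"
    using assms(1) unfolding restricts_to_unit_iff_trilinear_form by blast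
  then have unit: "\<And>i j k. i < r \<Longrightarrow> j < r \<Longrightarrow> k < r \<Longrightarrow>
      trilinear_form T (\<alpha> i) (\<beta> j) (\<gamma> k) = (if i = j \<and> j = k then 1 else 0)"
    by blast
  have "0 < r" using assms(2) by simp
  define M where "M = slice T (\<alpha> 0)"
  define U where "U = span (\<gamma> ` {..<r})"
  define V where "V = span (\<beta> ` {1..<r})"
  have "\<gamma> k \<bullet> (\<beta> i v* slice T (\<alpha> i)) = trilinear_form T (\<alpha> i) (\<beta> i) (\<gamma> k)" for i k
    by (subst inner_commute) (simp add: dot_lmul_matrix trilinear_form_eq_slice)
  then have "\<gamma> k \<bullet> (\<beta> i v* slice T (\<alpha> i)) = (if k = i then 1 else 0)"
    if "k \<in> {..<r}" "i \<in> {..<r}" for i k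
    using that by (simp add: unit)
  then have "inj_on \<gamma> {..<r}" "independent (\<gamma> ` {..<r})"
    using biorthogonal_family_independent[of "{..<r}" \<gamma> "\<lambda>i. \<beta> i v* slice T (\<alpha> i)"] by auto
  then have dim_U: "dim U = r"
    by (simp add: U_def dim_eq_card_independent card_image)
  have "\<beta> j \<bullet> (slice T (\<alpha> i) *v \<gamma> i) = (if j = i then 1 else 0)"
    if "j \<in> {1..<r}" "i \<in> {1..<r}" for i j
    using that by (simp add: unit flip: trilinear_form_eq_slice)
  then have "inj_on \<beta> {1..<r}" "independent (\<beta> ` {1..<r})"
    using biorthogonal_family_independent[of "{1..<r}" \<beta> "\<lambda>i. slice T (\<alpha> i) *v \<gamma> i"] by auto
  then have dim_V: "dim V = r - 1"
    by (simp add: V_def dim_eq_card_independent card_image)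
  have "(M *v u) \<bullet> v = 0" if "u \<in> U" "v \<in> V" for u v
  proof -
    have "orthogonal (M *v \<gamma> k) v" if "k < r" for k
    proof (rule orthogonal_to_span[OF \<open>v \<in> V\<close>[unfolded V_def]])
      fix y assume "y \<in> \<beta> ` {1..<r}"
      then obtain j where "y = \<beta> j" "1 \<le> j" "j < r" by auto
      then have "y \<bullet> (M *v \<gamma> k) = 0"
        using \<open>k < r\<close> by (simp add: unit M_def flip: trilinear_form_eq_slice)
      then show "orthogonal (M *v \<gamma> k) y" by (simp add: orthogonal_def inner_commute)
    qed
    then have "orthogonal v y" if "y \<in> (*v) M ` \<gamma> ` {..<r}" for y
      using that by (auto simp: orthogonal_def inner_commute)
    moreover have "M *v u \<in> span ((*v) M ` \<gamma> ` {..<r})"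
      using \<open>u \<in> U\<close> by (simp add: U_def span_linear_image matrix_vector_mul_linear)
    ultimately have "orthogonal v (M *v u)" by (rule orthogonal_to_span[rotated])
    then show ?thesis by (simp add: orthogonal_def inner_commute)
  qed
  moreover have "DIM(real^'b) < dim U + dim V"
    using assms(2) \<open>0 < r\<close> by (simp add: dim_U dim_V)
  ultimately obtain w where "w \<noteq> 0" "M *v w = 0"
    using linear_kernel_meets_subspace[OF matrix_vector_mul_linear, of U V M]
    by (metis U_def V_def subspace_span)
  moreover have "\<alpha> 0 \<noteq> 0"
  proof
    assume "\<alpha> 0 = 0"
    then have "trilinear_form T (\<alpha> 0) (\<beta> 0) (\<gamma> 0) = 0" by (simp add: trilinear_form_def)
    then show False using unit[of 0 0 0] \<open>0 < r\<close> by simp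
  qed
  ultimately show ?thesis using that M_def by blast
qed

section \<open>Subrank at least two off a hypersurface\<close>

lemma real_polynomial_function_nonzero_in_open:
  fixes f :: "'a::real_normed_vector \<Rightarrow> real"
  assumes "real_polynomial_function f" "f p \<noteq> 0" "open S" "T \<in> S"
  obtains T' where "T' \<in> S" "f T' \<noteq> 0"
proof -
  define g where "g = (\<lambda>t::real. f (T + t *\<^sub>R (p - T)))"
  have "polynomial_function (\<lambda>t::real. T + t *\<^sub>R (p - T))"
    by (intro polynomial_function_add polynomial_function_mult) auto
  then have "real_polynomial_function g"
    unfolding g_def using real_polynomial_function_compose[OF _ assms(1)] by (simp add: o_def)
  then obtain a n where g: "g = (\<lambda>t. \<Sum>i\<le>n. a i * t ^ i)"
    by (auto simp: real_polynomial_function_iff_sum)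
  define q where "q = (\<Sum>i\<le>n. monom (a i) i)"
  have q: "poly q t = g t" for t by (simp add: q_def g poly_sum poly_monom)
  have "q \<noteq> 0" using q[of 1] assms(2) by (auto simp: g_def)
  then have roots: "finite {t. poly q t = 0}" by (rule poly_roots_finite)
  obtain e where "e > 0" "ball T e \<subseteq> S" using assms(3,4) open_contains_ball by blast
  define d where "d = e / (norm (p - T) + 1)"
  have "d > 0" using \<open>e > 0\<close> by (simp add: d_def add_nonneg_pos)
  then have "infinite {0<..<d}" by simp
  then obtain t where t: "t \<in> {0<..<d}" "poly q t \<noteq> 0"
    using roots by (metis (mono_tags, lifting) finite_subset mem_Collect_eq subsetI)
  have "dist (T + t *\<^sub>R (p - T)) T = t * norm (p - T)" using t by (simp add: dist_norm)
  also have "\<dots> \<le> d * norm (p - T)" using t by (simp add: mult_right_mono)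
  also have "\<dots> < e"
    using \<open>e > 0\<close> add_pos_nonneg[OF zero_less_one norm_ge_zero[of "p - T"]]
    by (simp add: d_def pos_divide_less_eq algebra_simps)
  finally have "T + t *\<^sub>R (p - T) \<in> S" using \<open>ball T e \<subseteq> S\<close> by (auto simp: dist_commute)
  moreover have "f (T + t *\<^sub>R (p - T)) \<noteq> 0" using t q by (simp add: g_def)
  ultimately show ?thesis using that by blast
qed

lemma real_polynomial_function_tensor_entry: "real_polynomial_function (\<lambda>T::real^'c^'b^'a. T$a$b$c)"
  by (intro real_polynomial_function.intros(1) bounded_linear_compose[OF bounded_linear_vec_nth]
        bounded_linear_vec_nth)

lemma restricts_to_unit_2I:
  assumes "contract_last_two T y z' = 0" "contract_last_two T y' z = 0"
    and "x \<bullet> contract_last_two T y z = 1" "x \<bullet> contract_last_two T y' z' = 0"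
    and "x' \<bullet> contract_last_two T y z = 0" "x' \<bullet> contract_last_two T y' z' = 1"
  shows "restricts_to_unit 2 T"
  unfolding restricts_to_unit_iff_trilinear_form trilinear_form_eq_contract_last_two
proof (intro exI allI impI)
  fix i j k :: nat assume "i < 2" "j < 2" "k < 2"
  then show "(if i = 0 then x else x') \<bullet> contract_last_two T (if j = 0 then y else y') (if k = 0 then z else z')
      = (if i = j \<and> j = k then 1 else 0)"
    using assms by (auto simp: less_2_cases_iff)
qed

definition det3 ::
    "real \<Rightarrow> real \<Rightarrow> real \<Rightarrow> real \<Rightarrow> real \<Rightarrow> real \<Rightarrow> real \<Rightarrow> real \<Rightarrow> real \<Rightarrow> real" where
  "det3 a1 a2 a3 b1 b2 b3 c1 c2 c3 =
     a1 * (b2 * c3 - b3 * c2) - a2 * (b1 * c3 - b3 * c1) + a3 * (b1 * c2 - b2 * c1)"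

definition cross4 :: "real^4 \<Rightarrow> real^4 \<Rightarrow> real^4 \<Rightarrow> real^4" where
  "cross4 x y z = (\<chi> i.
     if i = 1 then det3 (x$2) (x$3) (x$4) (y$2) (y$3) (y$4) (z$2) (z$3) (z$4)
     else if i = 2 then - det3 (x$1) (x$3) (x$4) (y$1) (y$3) (y$4) (z$1) (z$3) (z$4)
     else if i = 3 then det3 (x$1) (x$2) (x$4) (y$1) (y$2) (y$4) (z$1) (z$2) (z$4)
     else - det3 (x$1) (x$2) (x$3) (y$1) (y$2) (y$3) (z$1) (z$2) (z$3))"

lemma cross4_nth:
  "cross4 x y z $ 1 = det3 (x$2) (x$3) (x$4) (y$2) (y$3) (y$4) (z$2) (z$3) (z$4)"
  "cross4 x y z $ 2 = - det3 (x$1) (x$3) (x$4) (y$1) (y$3) (y$4) (z$1) (z$3) (z$4)"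
  "cross4 x y z $ 3 = det3 (x$1) (x$2) (x$4) (y$1) (y$2) (y$4) (z$1) (z$2) (z$4)"
  "cross4 x y z $ 4 = - det3 (x$1) (x$2) (x$3) (y$1) (y$2) (y$3) (z$1) (z$2) (z$3)"
  by (simp_all add: cross4_def)

lemma inner_cross4:
  "x \<bullet> cross4 x y z = 0" "y \<bullet> cross4 x y z = 0" "z \<bullet> cross4 x y z = 0"
  by (simp_all add: inner_vec_def sum_4 cross4_nth det3_def algebra_simps)

lemma real_polynomial_function_cross4:
  assumes "\<And>i. real_polynomial_function (\<lambda>T. x T $ i)" "\<And>i. real_polynomial_function (\<lambda>T. y T $ i)"
    and "\<And>i. real_polynomial_function (\<lambda>T. z T $ i)"
  shows "real_polynomial_function (\<lambda>T. cross4 (x T) (y T) (z T) $ i)"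
  using exhaust_4[of i]
  by (auto simp: cross4_nth det3_def intro!: real_polynomial_function_diff real_polynomial_function_minus
      real_polynomial_function.intros(3,4) assms)

(* With y, z the two annihilators and e = axis 4 1, the contractions T(-, y, e) and T(-, e, z)
  vanish, so T restricts to I_2 as soon as T(-, y, z) and T(-, e, e) are linearly independent;
  the minor below is one of their 2 x 2 minors. *)
definition col4_annihilator :: "real^4^4^3 \<Rightarrow> real^4" where
  "col4_annihilator T = cross4 (column 4 (T$1)) (column 4 (T$2)) (column 4 (T$3))"

definition row4_annihilator :: "real^4^4^3 \<Rightarrow> real^4" where
  "row4_annihilator T = cross4 (T$1$4) (T$2$4) (T$3$4)"

lemma contract_last_two_col4_annihilator: "contract_last_two T (col4_annihilator T) (axis 4 1) = 0"
proof -
  have "col4_annihilator T \<bullet> column 4 (T$a) = 0" for a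
    using exhaust_3[of a] by (auto simp: col4_annihilator_def inner_cross4 inner_commute)
  then show ?thesis by (simp add: contract_last_two_def matrix_vector_mult_basis vec_eq_iff)
qed

lemma contract_last_two_row4_annihilator: "contract_last_two T (axis 4 1) (row4_annihilator T) = 0"
proof -
  have "T$a$4 \<bullet> row4_annihilator T = 0" for a
    using exhaust_3[of a] by (auto simp: row4_annihilator_def inner_cross4)
  then show ?thesis by (simp add: contract_last_two_def inner_axis' matrix_vector_mul_component vec_eq_iff)
qed

definition subrank2_minor :: "real^4^4^3 \<Rightarrow> real" where
  "subrank2_minor T =
     contract_last_two T (col4_annihilator T) (row4_annihilator T) $ 1 * T$2$4$4
     - contract_last_two T (col4_annihilator T) (row4_annihilator T) $ 2 * T$1$4$4"

lemma restricts_to_unit_2_if_minor: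
  assumes "subrank2_minor T \<noteq> 0"
  shows "restricts_to_unit 2 T"
proof -
  define u where "u = contract_last_two T (col4_annihilator T) (row4_annihilator T)"
  define v where "v = contract_last_two T (axis 4 1) (axis 4 1)"
  have v: "v $ a = T$a$4$4" for a
    by (simp add: v_def contract_last_two_def inner_axis' inner_axis matrix_vector_mul_component)
  define D where "D = subrank2_minor T"
  have D: "D = u$1 * v$2 - u$2 * v$1" by (simp add: D_def subrank2_minor_def u_def v)
  define x :: "real^3" where "x = (\<chi> a. if a = 1 then v$2 / D else if a = 2 then - v$1 / D else 0)"
  define x' :: "real^3" where "x' = (\<chi> a. if a = 1 then - u$2 / D else if a = 2 then u$1 / D else 0)"
  have "D \<noteq> 0" using assms by (simp add: D_def)
  show ?thesis
  proof (rule restricts_to_unit_2I[OF contract_last_two_col4_annihilator contract_last_two_row4_annihilator,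
        where x = x and x' = x'], fold u_def v_def)
    have "x \<bullet> u = (u$1 * v$2 - u$2 * v$1) / D" "x' \<bullet> v = (u$1 * v$2 - u$2 * v$1) / D"
      using \<open>D \<noteq> 0\<close> by (simp_all add: x_def x'_def inner_vec_def sum_3 field_simps)
    then show "x \<bullet> u = 1" "x' \<bullet> v = 1" using \<open>D \<noteq> 0\<close> by (simp_all flip: D)
    show "x \<bullet> v = 0" "x' \<bullet> u = 0"
      by (simp_all add: x_def x'_def inner_vec_def sum_3 field_simps)
  qed
qed

lemma real_polynomial_function_subrank2_minor: "real_polynomial_function subrank2_minor"
proof -
  have entry: "real_polynomial_function (\<lambda>T::real^4^4^3. T$a$b$c)" for a b c
    by (rule real_polynomial_function_tensor_entry)
  have "real_polynomial_function (\<lambda>T. col4_annihilator T $ i)" for i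
    unfolding col4_annihilator_def by (intro real_polynomial_function_cross4) (simp_all add: column_def entry)
  moreover have "real_polynomial_function (\<lambda>T. row4_annihilator T $ i)" for i
    unfolding row4_annihilator_def by (intro real_polynomial_function_cross4 entry)
  ultimately have "real_polynomial_function (\<lambda>T. contract_last_two T (col4_annihilator T) (row4_annihilator T) $ a)" for a
    unfolding contract_last_two_def inner_vec_def matrix_vector_mult_def
    by (simp, intro real_polynomial_function_sum real_polynomial_function.intros(3,4) entry) simp_all
  then show ?thesis
    unfolding subrank2_minor_def[abs_def] by (intro real_polynomial_function_diff real_polynomial_function.intros(4) entry)
qed

section \<open>No restriction to the unit tensor I_3 near the quaternion tensor\<close>

lemma slice_add: "slice (S + T) x = slice S x + slice T x"
  by (simp add: slice_def vec_eq_iff sum.distrib algebra_simps)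

lemma power2_norm_vec: "(norm v)\<^sup>2 = (\<Sum>i\<in>UNIV. (v$i)\<^sup>2)" for v :: "real^'n"
  unfolding power2_norm_eq_inner by (simp add: inner_vec_def power2_eq_square)

lemma power2_norm_tensor: "(norm T)\<^sup>2 = (\<Sum>a\<in>UNIV. \<Sum>b\<in>UNIV. \<Sum>c\<in>UNIV. (T$a$b$c)\<^sup>2)"
  for T :: "real^'c^'b^'a"
  unfolding power2_norm_eq_inner by (simp add: inner_vec_def power2_eq_square)

lemma norm_slice_le: "norm (slice D x *v w) \<le> norm D * norm x * norm w"
proof -
  have "((slice D x *v w) $ b)\<^sup>2 \<le> (\<Sum>a\<in>UNIV. \<Sum>c\<in>UNIV. (D$a$b$c)\<^sup>2) * ((norm x)\<^sup>2 * (norm w)\<^sup>2)" for b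
  proof -
    have "(slice D x *v w) $ b = (\<Sum>c\<in>UNIV. \<Sum>a\<in>UNIV. D$a$b$c * (x$a * w$c))"
      by (simp add: slice_def matrix_vector_mult_def sum_distrib_left sum_distrib_right mult_ac)
    also have "\<dots> = (\<Sum>a\<in>UNIV. \<Sum>c\<in>UNIV. D$a$b$c * (x$a * w$c))"
      by (rule sum.swap)
    also have "\<dots> = (\<Sum>(a, c)\<in>UNIV. D$a$b$c * (x$a * w$c))"
      by (simp add: sum.cartesian_product UNIV_Times_UNIV split_def)
    finally have "((slice D x *v w) $ b)\<^sup>2
        \<le> (\<Sum>(a, c)\<in>UNIV. (D$a$b$c)\<^sup>2) * (\<Sum>(a, c)\<in>UNIV. (x$a * w$c)\<^sup>2)"
      using Cauchy_Schwarz_ineq_sum[of "\<lambda>(a, c). D$a$b$c" "\<lambda>(a, c). x$a * w$c" UNIV]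
      by (simp add: case_prod_beta)
    also have "\<dots> = (\<Sum>a\<in>UNIV. \<Sum>c\<in>UNIV. (D$a$b$c)\<^sup>2) * ((norm x)\<^sup>2 * (norm w)\<^sup>2)"
      by (simp add: power2_norm_vec sum_product power_mult_distrib
          flip: UNIV_Times_UNIV sum.cartesian_product)
    finally show ?thesis .
  qed
  then have "(norm (slice D x *v w))\<^sup>2
      \<le> (\<Sum>b\<in>UNIV. (\<Sum>a\<in>UNIV. \<Sum>c\<in>UNIV. (D$a$b$c)\<^sup>2) * ((norm x)\<^sup>2 * (norm w)\<^sup>2))"
    unfolding power2_norm_vec[of "slice D x *v w"] by (rule sum_mono)
  also have "\<dots> = (\<Sum>b\<in>UNIV. \<Sum>a\<in>UNIV. \<Sum>c\<in>UNIV. (D$a$b$c)\<^sup>2) * ((norm x)\<^sup>2 * (norm w)\<^sup>2)"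
    by (simp add: sum_distrib_right)
  also have "\<dots> = (norm D * norm x * norm w)\<^sup>2"
    by (subst sum.swap) (simp add: power2_norm_tensor power_mult_distrib)
  finally show ?thesis by (rule power2_le_imp_le) simp
qed

(* Slice a is left multiplication by 1, i, j on the quaternions H = R^4 (basis 1, i, j, k),
  so the norm of the slice combination is multiplicative. *)
definition quaternion_tensor :: "real^4^4^3" where
  "quaternion_tensor = (\<chi> a b c.
     if a = 1 then (if b = c then 1 else 0)
     else if a = 2 then
       (if b = 1 \<and> c = 2 \<or> b = 3 \<and> c = 4 then -1 else if b = 2 \<and> c = 1 \<or> b = 4 \<and> c = 3 then 1 else 0)
     else
       (if b = 1 \<and> c = 3 \<or> b = 4 \<and> c = 2 then -1 else if b = 2 \<and> c = 4 \<or> b = 3 \<and> c = 1 then 1 else 0))"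

lemma norm_slice_quaternion_tensor: "norm (slice quaternion_tensor x *v w) = norm x * norm w"
proof (rule power2_eq_imp_eq)
  show "(norm (slice quaternion_tensor x *v w))\<^sup>2 = (norm x * norm w)\<^sup>2"
    unfolding power_mult_distrib power2_norm_vec
    by (simp add: slice_def quaternion_tensor_def matrix_vector_mult_def sum_3 sum_4
        power2_eq_square algebra_simps)
qed simp_all

lemma slice_nonsingular_near_quaternion_tensor:
  assumes "norm (T - quaternion_tensor) < 1" "x \<noteq> 0" "w \<noteq> 0"
  shows "slice T x *v w \<noteq> 0"
proof
  assume "slice T x *v w = 0"
  then have "slice quaternion_tensor x *v w = - (slice (T - quaternion_tensor) x *v w)"
    using slice_add[of quaternion_tensor "T - quaternion_tensor" x]
    by (simp add: matrix_vector_mult_add_rdistrib eq_neg_iff_add_eq_0)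
  then have "norm x * norm w = norm (slice (T - quaternion_tensor) x *v w)"
    by (simp flip: norm_slice_quaternion_tensor)
  also have "\<dots> \<le> norm (T - quaternion_tensor) * norm x * norm w"
    by (rule norm_slice_le)
  finally have "norm x * norm w \<le> norm (T - quaternion_tensor) * norm x * norm w" .
  moreover have "norm (T - quaternion_tensor) * (norm x * norm w) < 1 * (norm x * norm w)"
    using assms by (intro mult_strict_right_mono) auto
  ultimately show False by (simp add: mult.assoc)
qed

lemma not_restricts_to_unit_3_near_quaternion_tensor:
  assumes "norm (T - quaternion_tensor) < 1"
  shows "\<not> restricts_to_unit 3 T"
proof
  assume "restricts_to_unit 3 T"
  then obtain x w where "x \<noteq> 0" "w \<noteq> 0" "slice T x *v w = 0"
    by (rule restricts_to_unit_singular_slice) simp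
  then show False using slice_nonsingular_near_quaternion_tensor[OF assms] by blast
qed

definition subrank2_witness :: "real^4^4^3" where
  "subrank2_witness = quaternion_tensor + (\<chi> a b c. if a = 2 \<and> b = 4 \<and> c = 4 then 1/10 else 0)"

lemma subrank2_minor_witness: "subrank2_minor subrank2_witness = 1/10"
  by (simp add: subrank2_minor_def contract_last_two_def col4_annihilator_def row4_annihilator_def
      subrank2_witness_def quaternion_tensor_def cross4_nth det3_def inner_vec_def column_def
      matrix_vector_mult_def sum_3 sum_4)

lemma norm_subrank2_witness: "norm (subrank2_witness - quaternion_tensor) < 1"
proof -
  have "(norm (subrank2_witness - quaternion_tensor))\<^sup>2 = 1/100"
    unfolding power2_norm_tensor by (simp add: subrank2_witness_def sum_3 sum_4 power2_eq_square)
  then have "(norm (subrank2_witness - quaternion_tensor))\<^sup>2 < 1\<^sup>2" by simp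
  then show ?thesis by (rule power_less_imp_less_base) simp
qed

definition contract :: "real^'a^'a2 \<Rightarrow> real^'b^'b2 \<Rightarrow> real^'c^'c2 \<Rightarrow> real^'c^'b^'a \<Rightarrow> real^'c2^'b2^'a2" where
  "contract P Q R X = (\<chi> a b c. \<Sum>a'\<in>UNIV. \<Sum>b'\<in>UNIV. \<Sum>c'\<in>UNIV. P$a$a' * Q$b$b' * R$c$c' * X$a'$b'$c')"

lemma sum_swap3:
  "(\<Sum>a\<in>A. \<Sum>b\<in>B. \<Sum>c\<in>C. \<Sum>a'\<in>A'. \<Sum>b'\<in>B'. \<Sum>c'\<in>C'. f a b c a' b' c')
     = (\<Sum>a'\<in>A'. \<Sum>b'\<in>B'. \<Sum>c'\<in>C'. \<Sum>a\<in>A. \<Sum>b\<in>B. \<Sum>c\<in>C. f a b c a' b' c')"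
  using sum.swap[where g = "\<lambda>p q. f (fst p) (fst (snd p)) (snd (snd p)) (fst q) (fst (snd q)) (snd (snd q))"
      and A = "A \<times> B \<times> C" and B = "A' \<times> B' \<times> C'"]
  by (simp add: sum.cartesian_product')

lemma trilinear_form_contract:
  "trilinear_form (contract P Q R X) x y z = trilinear_form X (x v* P) (y v* Q) (z v* R)"
  unfolding trilinear_form_def contract_def vector_matrix_mult_def
  by (simp add: sum_distrib_left sum_distrib_right mult_ac sum_product) (rule sum_swap3)

lemma restricts_to_unit_contract:
  fixes P :: "real^'a^'a" and Q :: "real^'b^'b" and R :: "real^'c^'c"
  assumes "restricts_to_unit r X" "invertible P" "invertible Q" "invertible R"
  shows "restricts_to_unit r (contract P Q R X)"
proof -
  obtain \<alpha> \<beta> \<gamma> where unit: "\<forall>i<r. \<forall>j<r. \<forall>k<r.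
      trilinear_form X (\<alpha> i) (\<beta> j) (\<gamma> k) = (if i = j \<and> j = k then 1 else 0)"
    using assms(1) unfolding restricts_to_unit_iff_trilinear_form by blast
  obtain P' Q' R' where "P' ** P = mat 1" "Q' ** Q = mat 1" "R' ** R = mat 1"
    using assms(2-4) unfolding invertible_def by blast
  then have "trilinear_form (contract P Q R X) (\<alpha> i v* P') (\<beta> j v* Q') (\<gamma> k v* R')
      = trilinear_form X (\<alpha> i) (\<beta> j) (\<gamma> k)" for i j k
    by (simp add: trilinear_form_contract vector_matrix_mul_assoc)
  then show ?thesis
    unfolding restricts_to_unit_iff_trilinear_form using unit
    by (intro exI[of _ "\<lambda>i. \<alpha> i v* P'"] exI[of _ "\<lambda>j. \<beta> j v* Q'"] exI[of _ "\<lambda>k. \<gamma> k v* R'"]) simp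
qed

lemma contract_mat1_left: "contract A (mat 1) (mat 1) X = (\<chi> a b c. \<Sum>a'\<in>UNIV. A$a$a' * X$a'$b$c)"
  unfolding contract_def mat_def by (simp add: vec_eq_iff mult.assoc sum_distrib_left[symmetric] sum_delta_mult)

lemma contract_mat1_middle: "contract (mat 1) B (mat 1) X = (\<chi> a b c. \<Sum>b'\<in>UNIV. B$b$b' * X$a$b'$c)"
  unfolding contract_def mat_def by (simp add: vec_eq_iff mult.assoc sum_distrib_left[symmetric] sum_delta_mult)

lemma contract_mat1_right: "contract (mat 1) (mat 1) C X = (\<chi> a b c. \<Sum>c'\<in>UNIV. C$c$c' * X$a$b$c')"
  unfolding contract_def mat_def by (simp add: vec_eq_iff mult.assoc sum_distrib_left[symmetric] sum_delta_mult)

lemma contract_mat1: "contract (mat 1) (mat 1) (mat 1) X = X"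
  unfolding contract_def mat_def by (simp add: vec_eq_iff mult.assoc sum_distrib_left[symmetric] sum_delta_mult)

lemma norm_matrix_vector_mult_le: "norm (A *v v) \<le> norm A * norm v" for A :: "real^'n^'m"
proof (rule power2_le_imp_le)
  have "(norm (A *v v))\<^sup>2 = (\<Sum>i\<in>UNIV. (A$i \<bullet> v)\<^sup>2)"
    unfolding power2_norm_eq_inner by (simp add: inner_vec_def matrix_vector_mul_component power2_eq_square)
  also have "\<dots> \<le> (\<Sum>i\<in>UNIV. (norm (A$i))\<^sup>2 * (norm v)\<^sup>2)"
    using Cauchy_Schwarz_ineq by (intro sum_mono) (simp add: power2_norm_eq_inner power_mult_distrib)
  also have "\<dots> = (norm A * norm v)\<^sup>2"
    unfolding power_mult_distrib power2_norm_eq_inner[of A] by (simp add: inner_vec_def sum_distrib_right power2_norm_eq_inner)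
  finally show "(norm (A *v v))\<^sup>2 \<le> (norm A * norm v)\<^sup>2" .
qed simp

lemma invertible_mat1_add:
  fixes A :: "real^'n^'n"
  assumes "norm A < 1"
  shows "invertible (mat 1 + A)"
proof -
  have "v = 0" if "(mat 1 + A) *v v = 0" for v
  proof -
    have "v = - (A *v v)" using that by (simp add: matrix_vector_mult_add_rdistrib eq_neg_iff_add_eq_0)
    then have "norm v \<le> norm A * norm v" using norm_matrix_vector_mult_le[of A v] by (metis norm_minus_cancel)
    then have "(1 - norm A) * norm v \<le> 0" by (simp add: algebra_simps)
    then show "v = 0" using assms by (simp add: mult_le_0_iff)
  qed
  then show ?thesis
    unfolding invertible_left_inverse matrix_left_invertible_ker by blast
qed

lemma has_derivative_vec_lambda:
  fixes f :: "'x::real_normed_vector \<Rightarrow> 'b::euclidean_space^'n"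
  assumes "\<And>i. ((\<lambda>x. f x $ i) has_derivative (\<lambda>h. f' h $ i)) (at x0)"
  shows "(f has_derivative f') (at x0)"
proof -
  have "((\<lambda>x. f x \<bullet> e) has_derivative (\<lambda>h. f' h \<bullet> e)) (at x0)" if "e \<in> Basis" for e
  proof -
    obtain i u where "e = axis i u" using \<open>e \<in> Basis\<close> unfolding Basis_vec_def by blast
    show ?thesis
      unfolding \<open>e = axis i u\<close> inner_axis
      by (rule bounded_linear.has_derivative[OF bounded_linear_inner_left assms])
  qed
  then show ?thesis using has_derivative_componentwise_within[of f f' x0 UNIV] by simp
qed

lemma has_derivative_contract:
  assumes "(P has_derivative P') (at x0)" "(Q has_derivative Q') (at x0)"
    and "(R has_derivative R') (at x0)" "(X has_derivative X') (at x0)"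
  shows "((\<lambda>x. contract (P x) (Q x) (R x) (X x)) has_derivative
      (\<lambda>h. contract (P' h) (Q x0) (R x0) (X x0) + contract (P x0) (Q' h) (R x0) (X x0)
         + contract (P x0) (Q x0) (R' h) (X x0) + contract (P x0) (Q x0) (R x0) (X' h))) (at x0)"
proof (intro has_derivative_vec_lambda)
  note nth = bounded_linear.has_derivative[OF bounded_linear_vec_nth]
  fix a b c
  show "((\<lambda>x. contract (P x) (Q x) (R x) (X x) $ a $ b $ c) has_derivative
      (\<lambda>h. (contract (P' h) (Q x0) (R x0) (X x0) + contract (P x0) (Q' h) (R x0) (X x0)
         + contract (P x0) (Q x0) (R' h) (X x0) + contract (P x0) (Q x0) (R x0) (X' h)) $ a $ b $ c)) (at x0)"
    unfolding contract_def vector_add_component vec_lambda_beta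
    by (rule has_derivative_eq_rhs, (rule has_derivative_sum has_derivative_mult nth assms)+)
       (simp add: sum.distrib algebra_simps)
qed

section \<open>An open set of tensors restricting to I_3\<close>

(* Besides the unit block I_3 on the indices 1, 2, 3 the base point has nonzero entries in the
  last row and column: the orbit of I_3 alone has dimension 21 < 27 inside the 3 x 3 x 3 block,
  and these entries are what makes param_derivative surjective. *)
definition base_tensor :: "real^4^4^3" where
  "base_tensor = (\<chi> a b c.
     if (a, b, c) \<in> {(1, 1, 1), (2, 2, 2), (3, 3, 3)} then 1
     else if b = 4 \<and> c \<noteq> 4 then 1
     else if c = 4 \<and> (a, b) \<in> {(1, 2), (2, 3), (3, 1)} then 1
     else 0)"

definition border :: "real^4^4^3 \<Rightarrow> real^4^4^3" where
  "border \<sigma> = (\<chi> a b c. if b = 4 \<or> c = 4 then \<sigma>$a$b$c else 0)"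

type_synonym param_space = "(real^4^4^3) \<times> (real^3^3) \<times> (real^4^4) \<times> (real^4^4)"

definition param :: "param_space \<Rightarrow> real^4^4^3" where
  "param = (\<lambda>(\<sigma>, A, B, C). contract (mat 1 + A) (mat 1 + B) (mat 1 + C) (base_tensor + border \<sigma>))"

definition param_derivative :: "param_space \<Rightarrow> real^4^4^3" where
  "param_derivative = (\<lambda>(\<sigma>, A, B, C).
     contract A (mat 1) (mat 1) base_tensor + contract (mat 1) B (mat 1) base_tensor
     + contract (mat 1) (mat 1) C base_tensor + border \<sigma>)"

lemma restricts_to_unit_3_base_tensor: "restricts_to_unit 3 (base_tensor + border \<sigma>)"
proof -
  have "(base_tensor + border \<sigma>) $ of_nat (Suc i) $ of_nat (Suc j) $ of_nat (Suc k)
      = (if i = j \<and> j = k then 1 else 0)" if "i < 3" "j < 3" "k < 3" for i j k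
  proof -
    have "i = 0 \<or> i = 1 \<or> i = 2" "j = 0 \<or> j = 1 \<or> j = 2" "k = 0 \<or> k = 1 \<or> k = 2"
      using that by auto
    then show ?thesis by (elim disjE) (simp_all add: base_tensor_def border_def)
  qed
  then show ?thesis
    unfolding restricts_to_unit_iff_trilinear_form
    by (intro exI[of _ "\<lambda>i. axis (of_nat (Suc i)) 1"]) (simp add: trilinear_form_axis)
qed

lemma restricts_to_unit_3_param:
  assumes "norm x < 1"
  shows "restricts_to_unit 3 (param x)"
proof -
  obtain \<sigma> A B C where x: "x = (\<sigma>, A, B, C)" by (metis prod.exhaust)
  have "norm A < 1" "norm B < 1" "norm C < 1"
    using assms[unfolded x] norm_snd_le[where x = \<sigma> and y = "(A, B, C)"] norm_snd_le[where x = A and y = "(B, C)"]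
      norm_fst_le[of A "(B, C)"] norm_fst_le[of B C] norm_snd_le[where x = B and y = C] by linarith+
  then show ?thesis
    unfolding param_def x
    by (simp add: restricts_to_unit_contract invertible_mat1_add restricts_to_unit_3_base_tensor)
qed

lemma param_eq: "param = (\<lambda>x. contract (mat 1 + fst (snd x)) (mat 1 + fst (snd (snd x)))
      (mat 1 + snd (snd (snd x))) (base_tensor + border (fst x)))"
  by (simp add: param_def split_def)

lemma border_0: "border 0 = 0"
  by (simp add: border_def vec_eq_iff)

lemma bounded_linear_border: "bounded_linear border"
  by (rule bounded_linearI') (simp_all add: border_def vec_eq_iff)

lemma continuous_on_param: "continuous_on UNIV param"
proof -
  have "continuous_on UNIV (\<lambda>x. border (fst x))"
    by (intro continuous_on_compose2[OF linear_continuous_on[OF bounded_linear_border]] continuous_intros) auto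
  then show ?thesis
    unfolding param_eq contract_def by (intro continuous_intros)
qed

lemma param_has_derivative: "(param has_derivative param_derivative) (at 0)"
proof -
  note border = bounded_linear.has_derivative[OF bounded_linear_border]
  show ?thesis
    unfolding param_eq
    by (rule has_derivative_eq_rhs, (rule has_derivative_contract has_derivative_add has_derivative_const
        has_derivative_fst has_derivative_snd has_derivative_ident border)+)
       (simp add: param_derivative_def split_def contract_mat1 border_0)
qed

(* Solving param_derivative (0, A, B, C) = E on the block b, c < 4: the entries E_abc with a, b, c
  distinct determine the last columns of B and C, those with c = a (resp. b = a) the remaining
  off-diagonal entries of B (resp. C), and the diagonal ones b = c determine A. *)
definition embed4 :: "3 \<Rightarrow> 4" where
  "embed4 a = (if a = 1 then 1 else if a = 2 then 2 else 3)"

definition proj3 :: "4 \<Rightarrow> 3" where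
  "proj3 b = (if b = 1 then 1 else if b = 2 then 2 else 3)"

definition preimage_B4 :: "real^4^4^3 \<Rightarrow> real^4" where
  "preimage_B4 E = (\<chi> b. if b = 1 then E$2$1$3 else if b = 2 then E$3$2$1 else if b = 3 then E$1$3$2 else 0)"

definition preimage_C4 :: "real^4^4^3 \<Rightarrow> real^4" where
  "preimage_C4 E = (\<chi> c.
     if c = 1 then E$2$3$1 - preimage_B4 E $ 3
     else if c = 2 then E$3$1$2 - preimage_B4 E $ 1
     else if c = 3 then E$1$2$3 - preimage_B4 E $ 2
     else 0)"

definition preimage_A :: "real^4^4^3 \<Rightarrow> real^3^3" where
  "preimage_A E = (\<chi> a a'. E$a$(embed4 a')$(embed4 a') - preimage_B4 E $ embed4 a'
     - preimage_C4 E $ embed4 a' * base_tensor$a$(embed4 a')$4)"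

definition preimage_B :: "real^4^4^3 \<Rightarrow> real^4^4" where
  "preimage_B E = (\<chi> b b'.
     if b = 4 \<or> b = b' then 0
     else if b' = 4 then preimage_B4 E $ b
     else E$(proj3 b')$b$b' - preimage_B4 E $ b - preimage_C4 E $ b' * base_tensor$(proj3 b')$b$4)"

definition preimage_C :: "real^4^4^3 \<Rightarrow> real^4^4" where
  "preimage_C E = (\<chi> c c'.
     if c = 4 \<or> c = c' then 0
     else if c' = 4 then preimage_C4 E $ c
     else E$(proj3 c')$c'$c - preimage_B4 E $ c')"

lemma param_derivative_preimage_block:
  assumes "b \<noteq> 4" "c \<noteq> 4"
  shows "param_derivative (0, preimage_A E, preimage_B E, preimage_C E) $a$b$c = E$a$b$c"
proof -
  have "a = 1 \<or> a = 2 \<or> a = 3" "b = 1 \<or> b = 2 \<or> b = 3" "c = 1 \<or> c = 2 \<or> c = 3"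
    using exhaust_3[of a] exhaust_4[of b] exhaust_4[of c] assms by auto
  then show ?thesis
    by (elim disjE) (simp_all add: param_derivative_def contract_mat1_left contract_mat1_middle
        contract_mat1_right border_0 sum_3 sum_4 base_tensor_def preimage_A_def preimage_B_def preimage_C_def
        preimage_B4_def preimage_C4_def embed4_def proj3_def)
qed

lemma surj_param_derivative: "surj param_derivative"
proof (rule surjI)
  fix E
  define G where "G = param_derivative (0, preimage_A E, preimage_B E, preimage_C E)"
  have "param_derivative (E - G, preimage_A E, preimage_B E, preimage_C E) = G + border (E - G)"
    by (simp add: G_def param_derivative_def border_0)
  also have "\<dots> = E"
    by (simp add: vec_eq_iff border_def G_def param_derivative_preimage_block)
  finally show "param_derivative (E - G, preimage_A E, preimage_B E, preimage_C E) = E" .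
qed

lemma open_set_restricts_to_unit_3:
  obtains S :: "(real^4^4^3) set" where "open S" "S \<noteq> {}" "\<And>T. T \<in> S \<Longrightarrow> restricts_to_unit 3 T"
proof -
  obtain g where "linear g" "param_derivative \<circ> g = id"
    using real_vector.linear_surjective_right_inverse[OF has_derivative_linear[OF param_has_derivative]
        surj_param_derivative] by blast
  then have "param 0 \<in> interior (param ` ball 0 1)"
    using sussmann_open_mapping[OF open_UNIV continuous_on_param _ param_has_derivative]
    by (simp add: linear_conv_bounded_linear)
  moreover have "restricts_to_unit 3 T" if "T \<in> interior (param ` ball 0 1)" for T
    using interior_subset that restricts_to_unit_3_param by fastforce
  ultimately show ?thesis using that[of "interior (param ` ball 0 1)"] by blast
qed

lemma typical_subrank_le_card: "typical_subrank TYPE(real^'c^'b^'a) r \<Longrightarrow> r \<le> CARD('a)"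
  unfolding typical_subrank_def by (metis equals0I subrank_le_card)

lemma typical_subrank_ge_if_polynomial_certificate:
  fixes f :: "real^'c^'b^'a \<Rightarrow> real"
  assumes "typical_subrank TYPE(real^'c^'b^'a) r" "real_polynomial_function f" "f W \<noteq> 0"
    and "\<And>T. f T \<noteq> 0 \<Longrightarrow> restricts_to_unit k T"
  shows "k \<le> r"
proof -
  obtain S :: "(real^'c^'b^'a) set" where S: "open S" "S \<noteq> {}" "\<And>T. T \<in> S \<Longrightarrow> subrank T = r"
    using assms(1) unfolding typical_subrank_def by blast
  then obtain T where "T \<in> S" "f T \<noteq> 0"
    using real_polynomial_function_nonzero_in_open[OF assms(2,3)] by blast
  then show ?thesis using S(3) assms(4) le_subrank by metis
qed

lemma typical_subrank_2: "typical_subrank TYPE(real^4^4^3) 2"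
proof -
  define S where "S = ball quaternion_tensor 1 \<inter> {T. subrank2_minor T \<noteq> 0}"
  have "continuous_on UNIV subrank2_minor"
    using continuous_real_polymonial_function[OF real_polynomial_function_subrank2_minor]
    by (simp add: continuous_at_imp_continuous_on)
  then have "open S" unfolding S_def by (intro open_Int open_ball open_Collect_neq continuous_on_const)
  moreover have "subrank2_witness \<in> S"
    using norm_subrank2_witness subrank2_minor_witness by (simp add: S_def dist_norm norm_minus_commute)
  moreover have "subrank T = 2" if "T \<in> S" for T
    using that restricts_to_unit_2_if_minor not_restricts_to_unit_3_near_quaternion_tensor
    by (intro subrank_eqI) (auto simp: S_def dist_norm norm_minus_commute numeral_3_eq_3)
  ultimately show ?thesis unfolding typical_subrank_def by blast
qed

lemma typical_subrank_3: "typical_subrank TYPE(real^4^4^3) 3"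
proof -
  obtain S :: "(real^4^4^3) set" where "open S" "S \<noteq> {}" "\<And>T. T \<in> S \<Longrightarrow> restricts_to_unit 3 T"
    using open_set_restricts_to_unit_3 by blast
  moreover have "\<not> restricts_to_unit (Suc 3) T" for T :: "real^4^4^3"
  proof
    assume "restricts_to_unit (Suc 3) T"
    then have "Suc 3 \<le> CARD(3)" by (rule restricts_to_unit_le_card)
    then show False by simp
  qed
  ultimately show ?thesis unfolding typical_subrank_def by (metis subrank_eqI)
qed

theorem corollary4p14:
  shows "{r. typical_subrank TYPE(real^4^4^3) r} = {2, 3}"
proof (intro set_eqI iffI)
  fix r assume "r \<in> {r. typical_subrank TYPE(real^4^4^3) r}"
  then have r: "typical_subrank TYPE(real^4^4^3) r" by simp
  have "2 \<le> r"
    using subrank2_minor_witness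
    by (intro typical_subrank_ge_if_polynomial_certificate[where W = subrank2_witness,
          OF r real_polynomial_function_subrank2_minor _ restricts_to_unit_2_if_minor]) simp
  moreover have "r \<le> 3" using typical_subrank_le_card[OF r] by simp
  ultimately show "r \<in> {2, 3}" by auto
qed (auto intro: typical_subrank_2 typical_subrank_3)

end
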